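(* Let $F$ be an infinite field of characteristic $3$, let $A_1$ be the $F$-vector space of linear forms in variables $x_1,\dots,x_m$, and let $U\subseteq A_1$ be a subspace with $\dim U=n$. Suppose $a_1<a_2<\dots<a_n$ are integers with $\mathrm{ms}_i(U)\ge a_i$ for all $1\le i\le n$. Then for each $0\le k\le n$ there exists a subspace $U_k\subseteq U$ with $\dim U_k=k$ such that $\mathrm{ms}_i(U_k)\ge a_{n-k+i}$ for all $1\le i\le k$.
   Context: For a linear form $u=\sum_i c_ix_i$, $\mathrm{supp}(u)=\{x_i:c_i\ne 0\}$. For a subspace $V$ of linear forms, $\mathrm{supp}(V)=\bigcup_{v\in V}\mathrm{supp}(v)$. For a subspace $U$ and $1\le i\le\dim U$, the minimum support function is $\mathrm{ms}_i(U)=\min\{|\mathrm{supp}(V)|: V\subseteq U \text{ a subspace}, \dim V=i\}$. *)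

theory Defs
  imports "HOL-Analysis.Analysis"
begin

text \<open>Linear forms in variables x_i (i ranging over the finite index type 'm) over a field 'a
  are represented by their coefficient vectors in 'a ^ 'm; the F-vector-space structure is the
  library interpretation vec (scalar multiplication *s).\<close>

definition supp_form :: "'a::field ^ 'm \<Rightarrow> 'm set" where
  "supp_form u = {i. u $ i \<noteq> 0}"

definition supp_space :: "('a::field ^ 'm) set \<Rightarrow> 'm set" where
  "supp_space V = (\<Union>v\<in>V. supp_form v)"

text \<open>Minimum support function ms_i(U), meaningful for 1 <= i <= dim U.\<close>
definition ms :: "nat \<Rightarrow> ('a::field ^ 'm) set \<Rightarrow> nat" where
  "ms i U = Min {card (supp_space V) | V. vec.subspace V \<and> V \<subseteq> U \<and> vec.dim V = i}"

end

theory Submission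
  imports Defs "HOL-Computational_Algebra.Polynomial"
begin

text \<open>Cutting a subspace U by the kernel of a generic linear functional c gives a hyperplane W
  with ms_i(W) \<ge> ms_(i+1)(U): for V \<subseteq> W with support S, genericity of c provides a vector
  x \<in> U supported in S outside the kernel, so V + span{x} is an (i+1)-dimensional subspace of U
  with support S. Such a c exists over an infinite field because only finitely many supports S
  have to be taken care of, and c can be chosen on the moment curve (t^e_1, ..., t^e_m) avoiding
  finitely many polynomial roots. Iterating n - k times gives U_k.\<close>

lemma card_supp_space_le: "card (supp_space (V :: ('a::field ^ 'm) set)) \<le> CARD('m)"
  by (rule card_mono) auto

lemma finite_ms_candidates:
  "finite {card (supp_space V) | V. vec.subspace V \<and> V \<subseteq> (U :: ('a::field ^ 'm) set) \<and> vec.dim V = i}"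
  by (rule finite_subset[of _ "{..CARD('m)}"]) (auto simp: card_supp_space_le)

lemma ms_le_card_supp_space:
  fixes U V :: "('a::field ^ 'm) set"
  assumes "vec.subspace V" "V \<subseteq> U" "vec.dim V = i"
  shows "ms i U \<le> card (supp_space V)"
  unfolding ms_def by (rule Min_le[OF finite_ms_candidates]) (use assms in blast)

lemma ms_geI:
  fixes U :: "('a::field ^ 'm) set"
  assumes "vec.subspace U" "i \<le> vec.dim U"
    and "\<And>V. vec.subspace V \<Longrightarrow> V \<subseteq> U \<Longrightarrow> vec.dim V = i \<Longrightarrow> b \<le> card (supp_space V)"
  shows "b \<le> ms i U"
proof -
  have "vec.span U = U"
    using assms(1) by simp
  then obtain V where "vec.subspace V" "V \<subseteq> U" "vec.dim V = i"
    using vec.choose_subspace_of_subspace[OF assms(2)] by metis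
  then have "{card (supp_space V) | V. vec.subspace V \<and> V \<subseteq> U \<and> vec.dim V = i} \<noteq> {}"
    by blast
  with assms(3) show ?thesis
    unfolding ms_def by (auto simp: Min_ge_iff[OF finite_ms_candidates])
qed

lemma supp_space_span: "supp_space (vec.span B) = supp_space (B :: ('a::field ^ 'm) set)"
proof
  have "B \<subseteq> {x. \<forall>l. l \<notin> supp_space B \<longrightarrow> x $ l = 0}"
    by (auto simp: supp_space_def supp_form_def)
  moreover have "vec.subspace {x. \<forall>l. l \<notin> supp_space B \<longrightarrow> x $ l = 0}"
    by (rule vec.subspaceI) auto
  ultimately have "vec.span B \<subseteq> {x. \<forall>l. l \<notin> supp_space B \<longrightarrow> x $ l = 0}"
    by (rule vec.span_minimal)
  then show "supp_space (vec.span B) \<subseteq> supp_space B"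
    by (auto simp: supp_space_def supp_form_def)
  show "supp_space B \<subseteq> supp_space (vec.span B)"
    using vec.span_superset by (auto simp: supp_space_def)
qed

lemma ms_Suc_le_card_supp_space:
  fixes U V :: "('a::field ^ 'm) set"
  assumes U: "vec.subspace U" and V: "vec.subspace V" "V \<subseteq> U" "vec.dim V = i"
    and x: "x \<in> U" "x \<notin> V" "supp_form x \<subseteq> supp_space V"
  shows "ms (Suc i) U \<le> card (supp_space V)"
proof -
  define Y where "Y = vec.span (insert x V)"
  have "Y \<subseteq> U"
    unfolding Y_def using U V(2) x(1) by (simp add: vec.span_minimal)
  moreover have "vec.dim Y = Suc i"
    unfolding Y_def using V(1,3) x(2) by (simp add: vec.dim_insert vec.span_eq_iff[THEN iffD2])
  moreover have "supp_space Y = supp_space V"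
    unfolding Y_def supp_space_span using x(3) by (auto simp: supp_space_def)
  ultimately show ?thesis
    using ms_le_card_supp_space[of Y U "Suc i"] by (simp add: Y_def)
qed

definition dual_pairing :: "'a::field ^ 'm \<Rightarrow> 'a ^ 'm \<Rightarrow> 'a" where
  "dual_pairing c x = (\<Sum>l\<in>UNIV. c $ l * x $ l)"

lemma dual_pairing_zero [simp]: "dual_pairing c 0 = 0"
  by (simp add: dual_pairing_def)

lemma dual_pairing_add [simp]: "dual_pairing c (x + y) = dual_pairing c x + dual_pairing c y"
  by (simp add: dual_pairing_def distrib_left sum.distrib)

lemma dual_pairing_scale [simp]: "dual_pairing c (r *s x) = r * dual_pairing c x"
  by (simp add: dual_pairing_def sum_distrib_left mult.left_commute)

lemma dual_pairing_diff [simp]: "dual_pairing c (x - y) = dual_pairing c x - dual_pairing c y"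
  by (simp add: dual_pairing_def right_diff_distrib sum_subtractf)

lemma subspace_kernel_dual_pairing:
  assumes "vec.subspace U"
  shows "vec.subspace {x \<in> U. dual_pairing c x = 0}"
  using assms by (intro vec.subspaceI) (auto simp: vec.subspace_0 vec.subspace_add vec.subspace_scale)

lemma dim_kernel_dual_pairing:
  fixes U :: "('a::field ^ 'm) set"
  assumes U: "vec.subspace U" and u: "u \<in> U" "dual_pairing c u \<noteq> 0"
  shows "vec.dim {x \<in> U. dual_pairing c x = 0} = vec.dim U - 1"
proof -
  define W where "W = {x \<in> U. dual_pairing c x = 0}"
  have W: "vec.subspace W" "W \<subseteq> U"
    unfolding W_def using subspace_kernel_dual_pairing[OF U] by auto
  have "y \<in> vec.span (insert u W)" if y: "y \<in> U" for y
  proof -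
    define r where "r = dual_pairing c y / dual_pairing c u"
    have "y - r *s u \<in> W"
      using U y u by (simp add: W_def r_def vec.subspace_diff vec.subspace_scale)
    then have "(y - r *s u) + r *s u \<in> vec.span (insert u W)"
      by (intro vec.span_add vec.span_scale vec.span_base) auto
    then show ?thesis
      by simp
  qed
  then have "U \<subseteq> vec.span (insert u W)"
    by blast
  moreover have "vec.span (insert u W) \<subseteq> U"
    using U W(2) u(1) by (simp add: vec.span_minimal)
  ultimately have "vec.dim U = vec.dim (insert u W)"
    by (metis vec.dim_span subset_antisym)
  also have "\<dots> = vec.dim W + 1"
    using W(1) u(2) by (simp add: vec.dim_insert vec.span_eq_iff[THEN iffD2] W_def)
  finally show ?thesis
    by (simp add: W_def)
qed

text \<open>The pairing with the moment-curve point (t^e_l)_l is a nonzero polynomial in t, e being an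
  injective numbering of the coordinates.\<close>

lemma exists_dual_pairing_nonzero:
  fixes X :: "('a::field ^ 'm) set"
  assumes "infinite (UNIV :: 'a set)" "finite X" "0 \<notin> X"
  shows "\<exists>c. \<forall>x\<in>X. dual_pairing c x \<noteq> 0"
proof -
  obtain e :: "'m \<Rightarrow> nat" where e: "inj e"
    using finite_imp_inj_to_nat_seg[of "UNIV :: 'm set"] by auto
  define p where "p x = (\<Sum>l\<in>UNIV. monom (x $ l) (e l))" for x :: "'a ^ 'm"
  have poly_p: "poly (p x) t = dual_pairing (\<chi> l. t ^ e l) x" for x t
    by (simp add: p_def dual_pairing_def poly_sum poly_monom mult.commute)
  have "p x \<noteq> 0" if "x \<in> X" for x
  proof -
    have "x \<noteq> 0"
      using that assms(3) by auto
    then obtain l0 where l0: "x $ l0 \<noteq> 0"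
      by (metis vec_eq_iff zero_index)
    have "coeff (p x) (e l0) = (\<Sum>l\<in>UNIV. if l = l0 then x $ l else 0)"
      using e by (simp add: p_def coeff_sum inj_eq)
    with l0 show ?thesis
      by auto
  qed
  then have "finite (\<Union>x\<in>X. {t. poly (p x) t = 0})"
    using assms(2) poly_roots_finite by blast
  then obtain t where "t \<notin> (\<Union>x\<in>X. {t. poly (p x) t = 0})"
    using assms(1) by (metis ex_new_if_finite)
  then show ?thesis
    using poly_p by auto
qed

lemma exists_generic_dual_pairing:
  fixes U :: "('a::field ^ 'm) set"
  assumes "infinite (UNIV :: 'a set)"
  shows "\<exists>c. \<forall>S. (\<exists>x\<in>U. x \<noteq> 0 \<and> supp_form x \<subseteq> S) \<longrightarrow>
                  (\<exists>x\<in>U. supp_form x \<subseteq> S \<and> dual_pairing c x \<noteq> 0)"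
proof -
  define Supps where "Supps = {S. \<exists>x\<in>U. x \<noteq> 0 \<and> supp_form x \<subseteq> S}"
  define witness where "witness S = (SOME x. x \<in> U \<and> x \<noteq> 0 \<and> supp_form x \<subseteq> S)" for S
  have witness: "witness S \<in> U \<and> witness S \<noteq> 0 \<and> supp_form (witness S) \<subseteq> S"
    if "S \<in> Supps" for S
  proof -
    from that obtain x where "x \<in> U \<and> x \<noteq> 0 \<and> supp_form x \<subseteq> S"
      unfolding Supps_def by blast
    then show ?thesis
      unfolding witness_def by (rule someI)
  qed
  have "0 \<notin> witness ` Supps"
    using witness by fastforce
  moreover have "finite (witness ` Supps)"
    by simp
  ultimately obtain c where c: "\<forall>x\<in>witness ` Supps. dual_pairing c x \<noteq> 0"
    using exists_dual_pairing_nonzero[OF assms] by blast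
  have "\<exists>x\<in>U. supp_form x \<subseteq> S \<and> dual_pairing c x \<noteq> 0" if "S \<in> Supps" for S
    using witness[OF that] c that by blast
  then show ?thesis
    unfolding Supps_def by blast
qed

lemma exists_hyperplane_ms_Suc_le:
  fixes U :: "('a::field ^ 'm) set"
  assumes inf: "infinite (UNIV :: 'a set)" and U: "vec.subspace U" "1 \<le> vec.dim U"
  shows "\<exists>W. vec.subspace W \<and> W \<subseteq> U \<and> vec.dim W = vec.dim U - 1 \<and>
           (\<forall>i. 1 \<le> i \<and> i \<le> vec.dim W \<longrightarrow> ms (Suc i) U \<le> ms i W)"
proof -
  obtain c where c: "\<And>S. \<exists>x\<in>U. x \<noteq> 0 \<and> supp_form x \<subseteq> S \<Longrightarrow>
                          \<exists>x\<in>U. supp_form x \<subseteq> S \<and> dual_pairing c x \<noteq> 0"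
    using exists_generic_dual_pairing[OF inf] by blast
  define W where "W = {x \<in> U. dual_pairing c x = 0}"
  have W: "vec.subspace W" "W \<subseteq> U"
    unfolding W_def using subspace_kernel_dual_pairing[OF U(1)] by auto
  have "\<not> U \<subseteq> {0}"
    using U(2) by (metis vec.dim_eq_0 not_one_le_zero)
  then obtain u where "u \<in> U" "dual_pairing c u \<noteq> 0"
    using c[of UNIV] by blast
  then have dim_W: "vec.dim W = vec.dim U - 1"
    unfolding W_def by (rule dim_kernel_dual_pairing[OF U(1)])
  have "ms (Suc i) U \<le> ms i W" if i: "1 \<le> i" "i \<le> vec.dim W" for i
  proof (rule ms_geI[OF W(1) i(2)])
    fix V assume V: "vec.subspace V" "V \<subseteq> W" "vec.dim V = i"
    obtain v where "v \<in> V" "v \<noteq> 0"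
      using V(3) i(1) vec.dim_eq_0[of V] by auto
    then have "\<exists>x\<in>U. x \<noteq> 0 \<and> supp_form x \<subseteq> supp_space V"
      using V(2) W(2) by (auto simp: supp_space_def)
    then obtain x where x: "x \<in> U" "supp_form x \<subseteq> supp_space V" "dual_pairing c x \<noteq> 0"
      using c by blast
    then have "x \<notin> V"
      using V(2) by (auto simp: W_def)
    with x show "ms (Suc i) U \<le> card (supp_space V)"
      using ms_Suc_le_card_supp_space[OF U(1) V(1) _ V(3)] V(2) W(2) by blast
  qed
  with W dim_W show ?thesis
    by blast
qed

lemma exists_subspace_ms_shift:
  fixes U :: "('a::field ^ 'm) set"
  assumes inf: "infinite (UNIV :: 'a set)" and U: "vec.subspace U" and d: "d \<le> vec.dim U"
  shows "\<exists>W. vec.subspace W \<and> W \<subseteq> U \<and> vec.dim W = vec.dim U - d \<and>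
           (\<forall>i. 1 \<le> i \<and> i \<le> vec.dim W \<longrightarrow> ms (d + i) U \<le> ms i W)"
  using d
proof (induction d)
  case 0
  with U show ?case
    by auto
next
  case (Suc d)
  then obtain W where W: "vec.subspace W" "W \<subseteq> U" "vec.dim W = vec.dim U - d"
    "\<And>i. 1 \<le> i \<Longrightarrow> i \<le> vec.dim W \<Longrightarrow> ms (d + i) U \<le> ms i W"
    by auto
  have "1 \<le> vec.dim W"
    using W(3) Suc.prems by simp
  then obtain W' where W': "vec.subspace W'" "W' \<subseteq> W" "vec.dim W' = vec.dim W - 1"
    "\<And>i. 1 \<le> i \<Longrightarrow> i \<le> vec.dim W' \<Longrightarrow> ms (Suc i) W \<le> ms i W'"
    using exists_hyperplane_ms_Suc_le[OF inf W(1)] by blast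
  have shift: "ms (Suc d + i) U \<le> ms i W'" if "1 \<le> i" "i \<le> vec.dim W'" for i
  proof -
    have "Suc i \<le> vec.dim W"
      using that W'(3) by linarith
    then show ?thesis
      using W(4)[of "Suc i"] W'(4)[OF that] by simp
  qed
  show ?case
    using W W' shift by (intro exI[of _ W']) auto
qed

theorem lemma6:
  fixes U :: "('a::field ^ 'm) set"
    and n :: nat
    and a :: "nat \<Rightarrow> int"
  assumes "infinite (UNIV :: 'a set)"
    and "CHAR('a) = 3"
    and "vec.subspace U"
    and "vec.dim U = n"
    and "\<And>i j. 1 \<le> i \<Longrightarrow> i < j \<Longrightarrow> j \<le> n \<Longrightarrow> a i < a j"
    and "\<And>i. 1 \<le> i \<Longrightarrow> i \<le> n \<Longrightarrow> int (ms i U) \<ge> a i"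
  shows "\<forall>k \<le> n. \<exists>Uk. vec.subspace Uk \<and> Uk \<subseteq> U \<and> vec.dim Uk = k \<and>
           (\<forall>i. 1 \<le> i \<and> i \<le> k \<longrightarrow> int (ms i Uk) \<ge> a (n - k + i))"
proof (intro allI impI)
  fix k assume "k \<le> n"
  then obtain Uk where Uk: "vec.subspace Uk" "Uk \<subseteq> U" "vec.dim Uk = k"
    "\<And>i. 1 \<le> i \<Longrightarrow> i \<le> k \<Longrightarrow> ms (n - k + i) U \<le> ms i Uk"
    using exists_subspace_ms_shift[OF assms(1,3), of "n - k"] assms(4) by auto
  have "a (n - k + i) \<le> int (ms i Uk)" if "1 \<le> i" "i \<le> k" for i
  proof -
    have "a (n - k + i) \<le> int (ms (n - k + i) U)"
      by (rule assms(6)) (use that \<open>k \<le> n\<close> in auto)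
    also have "\<dots> \<le> int (ms i Uk)"
      using Uk(4)[OF that] by simp
    finally show ?thesis .
  qed
  with Uk show "\<exists>Uk. vec.subspace Uk \<and> Uk \<subseteq> U \<and> vec.dim Uk = k \<and>
           (\<forall>i. 1 \<le> i \<and> i \<le> k \<longrightarrow> int (ms i Uk) \<ge> a (n - k + i))"
    by blast
qed

end
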